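(* Let $\theta>2$, let $G=(\mu,\mathcal{V},\mathcal{W},\mathcal{E})$ be a $\theta$-maximal, non-trivial weighted bipartite graph, and let $w_0\in\mathcal{W}$. There exists a subgraph $G'=(\mu,\mathcal{V}',\mathcal{W}',\mathcal{E}')$ of $G$ such that: (a) $(v,w_0)\in \mathcal{E}'$ for all $v\in\mathcal{V}'$; (b) for all $w\in\mathcal{W}'$, there exists $v\in\mathcal{V}'$ such that $(v,w)\in\mathcal{E}'$; (c) $\mu^{(\theta)}(G)\le (1-1/\theta)^{-\theta} \mu^{(\theta-1)}(G')$.
   Context: A weighted bipartite graph is $G=(\mu,\mathcal{V},\mathcal{W},\mathcal{E})$ with $\mu:\mathbb{R}_{>0}\to\mathbb{R}_{>0}$, $\mathcal{V},\mathcal{W}$ finite sets of positive reals, $\mathcal{E}\subseteq\mathcal{V}\times\mathcal{W}$; it is non-trivial if $\mathcal{E}\ne\emptyset$. $\mu(\mathcal{T})=\sum_{t\in\mathcal{T}}\mu(t)$ and $\mu(\mathcal{E})=\sum_{(v,w)\in\mathcal{E}}\mu(v)\mu(w)$. Edge density $\delta(G)=\mu(\mathcal{E})/(\mu(\mathcal{V})\mu(\mathcal{W}))$ if $\mathcal{E}\ne\emptyset$, else $0$. For $\theta\ge1$, $\mu^{(\theta)}(G)=\delta(G)^\theta\mu(\mathcal{V})\mu(\mathcal{W})$. A subgraph of $G$ is $(\mu,\mathcal{V}',\mathcal{W}',\mathcal{E}')$ with $\mathcal{V}'\subseteq\mathcal{V}$, $\mathcal{W}'\subseteq\mathcal{W}$,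 $\mathcal{E}'\subseteq\mathcal{E}\cap(\mathcal{V}'\times\mathcal{W}')$. $G$ is $\theta$-maximal if $\mu^{(\theta)}(G)\ge\mu^{(\theta)}(G')$ for every subgraph $G'$. *)

theory Defs
  imports Complex_Main
begin

definition wbg :: "(real \<Rightarrow> real) \<Rightarrow> real set \<Rightarrow> real set \<Rightarrow> (real \<times> real) set \<Rightarrow> bool" where
  "wbg mu V W E \<longleftrightarrow> (\<forall>x>0. mu x > 0) \<and> finite V \<and> finite W \<and>
     (\<forall>v\<in>V. v > 0) \<and> (\<forall>w\<in>W. w > 0) \<and> E \<subseteq> V \<times> W"

definition wmeas :: "(real \<Rightarrow> real) \<Rightarrow> real set \<Rightarrow> real" where
  "wmeas mu T = (\<Sum>t\<in>T. mu t)"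

definition emeas :: "(real \<Rightarrow> real) \<Rightarrow> (real \<times> real) set \<Rightarrow> real" where
  "emeas mu E = (\<Sum>(v,w)\<in>E. mu v * mu w)"

definition density :: "(real \<Rightarrow> real) \<Rightarrow> real set \<Rightarrow> real set \<Rightarrow> (real \<times> real) set \<Rightarrow> real" where
  "density mu V W E = (if E = {} then 0 else emeas mu E / (wmeas mu V * wmeas mu W))"

definition mu_theta :: "real \<Rightarrow> (real \<Rightarrow> real) \<Rightarrow> real set \<Rightarrow> real set \<Rightarrow> (real \<times> real) set \<Rightarrow> real" where
  "mu_theta \<theta> mu V W E = density mu V W E powr \<theta> * wmeas mu V * wmeas mu W"

definition is_subgraph :: "real set \<Rightarrow> real set \<Rightarrow> (real \<times> real) set \<Rightarrow>
    real set \<Rightarrow> real set \<Rightarrow> (real \<times> real) set \<Rightarrow> bool" where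
  "is_subgraph V' W' E' V W E \<longleftrightarrow> V' \<subseteq> V \<and> W' \<subseteq> W \<and> E' \<subseteq> E \<inter> (V' \<times> W')"

definition theta_maximal :: "real \<Rightarrow> (real \<Rightarrow> real) \<Rightarrow> real set \<Rightarrow> real set \<Rightarrow> (real \<times> real) set \<Rightarrow> bool" where
  "theta_maximal \<theta> mu V W E \<longleftrightarrow>
     (\<forall>V' W' E'. is_subgraph V' W' E' V W E \<longrightarrow> mu_theta \<theta> mu V W E \<ge> mu_theta \<theta> mu V' W' E')"

end

theory Submission
  imports Defs "HOL-Analysis.Convex"
begin

text \<open>Write \<open>p = 1 - 1/\<theta>\<close> and \<open>a, b, e\<close> for the measures of \<open>V, W, E\<close>, so that
  \<open>\<mu>^(\<theta>)(G) = e^\<theta> (ab)^(1-\<theta>)\<close>. Deleting a set \<open>S\<close> of right vertices from a \<open>\<theta>\<close>-maximal graph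
  does not increase \<open>\<mu>^(\<theta>)\<close>; comparing the two values and using concavity of \<open>z \<mapsto> z^p\<close>
  shows that the edges at \<open>S\<close> carry at least \<open>p e \<mu>(S) / b\<close> of the edge mass, and symmetrically
  for left vertices. Let \<open>V'\<close> be the neighbourhood of \<open>w\<^sub>0\<close>, \<open>W'\<close> the neighbourhood of \<open>V'\<close> and
  \<open>E'\<close> the edges between them. For \<open>S = {w\<^sub>0}\<close> the bound gives \<open>\<mu>(V') \<ge> p e / b\<close>, and for
  \<open>S = V'\<close> it gives \<open>\<mu>(E') \<ge> p e \<mu>(V') / a\<close>. Since \<open>\<theta> \<ge> 2\<close>, the quantity
  \<open>\<mu>^(\<theta>-1)(G') = \<mu>(E')^(\<theta>-1) (\<mu>(V') \<mu>(W'))^(2-\<theta>)\<close> only decreases when \<open>\<mu>(W')\<close> is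
  replaced by \<open>b \<ge> \<mu>(W')\<close>, and inserting the two bounds yields the claim.\<close>

lemma powr_le_tangent_at_1:
  fixes z p :: real
  assumes "0 \<le> z" "0 \<le> p" "p \<le> 1"
  shows "z powr p \<le> 1 + p * (z - 1)"
proof (cases "z = 0")
  case False
  then have "z powr p * 1 powr (1 - p) \<le> p * z + (1 - p) * 1"
    using assms by (intro Youngs_inequality_0) auto
  then show ?thesis by (simp add: algebra_simps)
qed (use assms in auto)

lemma edge_loss_lower_bound:
  fixes \<theta> a b b1 e e1 :: real
  assumes "\<theta> > 1" "0 \<le> b1" "b1 \<le> b" "0 \<le> e1" "e1 \<le> a * b1" "0 \<le> e"
    and mass_le: "e1 powr \<theta> * (a * b1) powr (1 - \<theta>) \<le> e powr \<theta> * (a * b) powr (1 - \<theta>)"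
  shows "(1 - 1/\<theta>) * e * (b - b1) \<le> b * (e - e1)"
proof (cases "e1 = 0")
  case True
  have "(1 - 1/\<theta>) * e * (b - b1) \<le> e * b"
    using assms by (intro mult_mono mult_left_le_one_le) auto
  then show ?thesis using True by (simp add: mult.commute)
next
  case False
  then have "0 < e1" using assms(4) by simp
  moreover have "0 < a * b1" using calculation assms(5) by linarith
  ultimately have pos: "0 < e1" "0 < a" "0 < b1" "0 < b"
    using assms(2,3) by (auto simp: zero_less_mult_iff)
  then have "0 < e1 powr \<theta> * (a * b1) powr (1 - \<theta>)" by simp
  then have "0 < e" using mass_le assms(6) by (cases "e = 0") auto
  define p where "p = 1 - 1/\<theta>"
  have "e1 powr \<theta> * b1 powr (1 - \<theta>) \<le> e powr \<theta> * b powr (1 - \<theta>)"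
    using mass_le pos by (simp add: powr_mult)
  then have "(e1 / e) powr \<theta> \<le> (b1 / b) powr (\<theta> - 1)"
    using pos \<open>0 < e\<close> by (simp add: powr_divide powr_diff field_simps)
  then have "((e1 / e) powr \<theta>) powr (1 / \<theta>) \<le> ((b1 / b) powr (\<theta> - 1)) powr (1 / \<theta>)"
    using assms(1) by (intro powr_mono2) auto
  then have "e1 / e \<le> ((b1 / b) powr (\<theta> - 1)) powr (1 / \<theta>)"
    using pos \<open>0 < e\<close> assms(1) by (simp add: powr_powr)
  also have "\<dots> = (b1 / b) powr p"
    using assms(1) by (simp add: powr_powr p_def field_simps)
  also have "\<dots> \<le> 1 + p * (b1 / b - 1)"
    using pos assms(1) by (intro powr_le_tangent_at_1) (auto simp: p_def)
  finally have "e1 \<le> e * (1 + p * (b1 / b - 1))"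
    using \<open>0 < e\<close> by (simp add: divide_le_eq mult.commute)
  then have "b * e1 \<le> b * (e * (1 + p * (b1 / b - 1)))"
    using pos by simp
  also have "\<dots> = b * e - p * e * (b - b1)"
    using pos by (simp add: field_simps)
  finally show ?thesis
    by (simp add: p_def right_diff_distrib)
qed

lemma theta_mass_le_of_degree_bounds:
  fixes \<theta> p a b a' b' e e' :: real
  assumes "2 \<le> \<theta>" "0 < p" "0 < a" "0 < b'" "b' \<le> b" "0 < e" "0 \<le> a'"
    and deg: "p * e \<le> b * a'" and dens: "p * e * a' \<le> a * e'"
  shows "e powr \<theta> * (a * b) powr (1 - \<theta>)
    \<le> p powr (- \<theta>) * (e' powr (\<theta> - 1) * (a' * b') powr (2 - \<theta>))"
proof -
  have "0 < b" using assms(4,5) by linarith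
  have "0 < b * a'" using deg mult_pos_pos[OF assms(2,6)] by linarith
  then have "0 < a'" using \<open>0 < b\<close> by (simp add: zero_less_mult_iff)
  have "p powr \<theta> * (e powr \<theta> * (a * b) powr (1 - \<theta>))
      = (p * e) powr (\<theta> - 1) * a powr (1 - \<theta>) * (p * e / b) * b powr (2 - \<theta>)"
    using assms \<open>0 < b\<close> by (simp add: powr_mult powr_diff field_simps power2_eq_square)
  also have "\<dots> \<le> (p * e) powr (\<theta> - 1) * a powr (1 - \<theta>) * a' * b powr (2 - \<theta>)"
    using deg \<open>0 < b\<close>
    by (intro mult_right_mono mult_left_mono) (auto simp: divide_le_eq mult.commute)
  also have "\<dots> = (p * e * a' / a) powr (\<theta> - 1) * (a' * b) powr (2 - \<theta>)"
    using assms \<open>0 < b\<close> \<open>0 < a'\<close>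
    by (simp add: powr_mult powr_divide powr_diff field_simps power2_eq_square)
  also have "\<dots> \<le> e' powr (\<theta> - 1) * (a' * b') powr (2 - \<theta>)"
    using assms \<open>0 < a'\<close> by (intro mult_mono powr_mono2 powr_mono2') (auto simp: divide_le_eq mult.commute)
  finally show ?thesis
    using assms(2) by (simp add: powr_minus divide_simps mult.commute)
qed

lemma wmeas_nonneg: "(\<And>t. t \<in> T \<Longrightarrow> 0 \<le> mu t) \<Longrightarrow> 0 \<le> wmeas mu T"
  unfolding wmeas_def by (rule sum_nonneg)

lemma wmeas_pos: "finite T \<Longrightarrow> t \<in> T \<Longrightarrow> (\<And>t. t \<in> T \<Longrightarrow> 0 < mu t) \<Longrightarrow> 0 < wmeas mu T"
  unfolding wmeas_def by (rule sum_pos) auto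

lemma wmeas_mono:
  "finite T \<Longrightarrow> S \<subseteq> T \<Longrightarrow> (\<And>t. t \<in> T \<Longrightarrow> 0 \<le> mu t) \<Longrightarrow> wmeas mu S \<le> wmeas mu T"
  unfolding wmeas_def by (rule sum_mono2) auto

lemma wmeas_diff: "finite T \<Longrightarrow> S \<subseteq> T \<Longrightarrow> wmeas mu (T - S) = wmeas mu T - wmeas mu S"
  unfolding wmeas_def by (rule sum_diff)

lemma emeas_diff: "finite E \<Longrightarrow> F \<subseteq> E \<Longrightarrow> emeas mu (E - F) = emeas mu E - emeas mu F"
  unfolding emeas_def by (rule sum_diff)

lemma emeas_nonneg:
  assumes "E \<subseteq> V \<times> W" "\<And>x. x \<in> V \<union> W \<Longrightarrow> 0 \<le> mu x"
  shows "0 \<le> emeas mu E"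
  unfolding emeas_def by (rule sum_nonneg) (use assms in auto)

lemma emeas_le_wmeas_mult:
  assumes "finite V" "finite W" "E \<subseteq> V \<times> W" "\<And>x. x \<in> V \<union> W \<Longrightarrow> 0 \<le> mu x"
  shows "emeas mu E \<le> wmeas mu V * wmeas mu W"
proof -
  have "emeas mu E \<le> (\<Sum>(v, w)\<in>V \<times> W. mu v * mu w)"
    unfolding emeas_def by (rule sum_mono2) (use assms in auto)
  also have "\<dots> = wmeas mu V * wmeas mu W"
    by (simp add: wmeas_def sum.cartesian_product sum_product)
  finally show ?thesis .
qed

lemma emeas_edges_at: "emeas mu (E \<inter> V \<times> {w}) = mu w * wmeas mu {v \<in> V. (v, w) \<in> E}"
proof -
  have "E \<inter> V \<times> {w} = (\<lambda>v. (v, w)) ` {v \<in> V. (v, w) \<in> E}" by auto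
  then show ?thesis
    by (simp add: emeas_def wmeas_def sum.reindex inj_on_def sum_distrib_left mult.commute)
qed

text \<open>No positivity of the sides is needed: if one side has measure zero, both expressions vanish because
  \<open>0 powr x = 0\<close> and \<open>x / 0 = 0\<close>.\<close>

lemma mu_theta_eq:
  assumes "E \<subseteq> V \<times> W" "\<And>x. x \<in> V \<union> W \<Longrightarrow> 0 \<le> mu x"
  shows "mu_theta \<theta> mu V W E = emeas mu E powr \<theta> * (wmeas mu V * wmeas mu W) powr (1 - \<theta>)"
proof -
  have "0 \<le> wmeas mu V * wmeas mu W"
    using assms(2) by (intro mult_nonneg_nonneg wmeas_nonneg) auto
  moreover have "0 \<le> emeas mu E" using assms by (rule emeas_nonneg)
  ultimately show ?thesis
    unfolding mu_theta_def density_def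
    by (cases "wmeas mu V * wmeas mu W = 0")
      (auto simp: powr_divide powr_diff emeas_def)
qed

lemma emeas_swap: "emeas mu (prod.swap ` E) = emeas mu E"
  by (simp add: emeas_def sum.reindex case_prod_beta mult.commute)

lemma mu_theta_swap: "mu_theta \<theta> mu W V (prod.swap ` E) = mu_theta \<theta> mu V W E"
  by (simp add: mu_theta_def density_def emeas_swap mult_ac)

lemma wbg_swap: "wbg mu V W E \<Longrightarrow> wbg mu W V (prod.swap ` E)"
  by (auto simp: wbg_def)

lemma theta_maximal_swap:
  assumes "theta_maximal \<theta> mu V W E"
  shows "theta_maximal \<theta> mu W V (prod.swap ` E)"
  unfolding theta_maximal_def
proof (intro allI impI)
  fix W' V' E' assume "is_subgraph W' V' E' W V (prod.swap ` E)"
  then have "is_subgraph V' W' (prod.swap ` E') V W E"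
    by (auto simp: is_subgraph_def)
  then have "mu_theta \<theta> mu V' W' (prod.swap ` E') \<le> mu_theta \<theta> mu V W E"
    using assms by (auto simp: theta_maximal_def)
  then show "mu_theta \<theta> mu W' V' E' \<le> mu_theta \<theta> mu W V (prod.swap ` E)"
    using mu_theta_swap[of \<theta> mu V' W' "prod.swap ` E'"] by (simp add: image_image mu_theta_swap)
qed

lemma wbg_mu_pos: "wbg mu V W E \<Longrightarrow> x \<in> V \<union> W \<Longrightarrow> 0 < mu x"
  by (auto simp: wbg_def)

lemma wbg_emeas_pos:
  assumes "wbg mu V W E" "E \<noteq> {}"
  shows "0 < emeas mu E"
proof -
  have "finite E" "E \<subseteq> V \<times> W"
    using assms(1) by (auto simp: wbg_def intro: finite_subset)
  then show ?thesis
    unfolding emeas_def using assms wbg_mu_pos[OF assms(1)] by (intro sum_pos) auto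
qed

lemma theta_maximal_incident_edges_right:
  assumes "1 < \<theta>" "wbg mu V W E" "theta_maximal \<theta> mu V W E" "S \<subseteq> W"
  shows "(1 - 1/\<theta>) * emeas mu E * wmeas mu S \<le> wmeas mu W * emeas mu (E \<inter> V \<times> S)"
proof -
  from assms(2) have fin: "finite V" "finite W" and E: "E \<subseteq> V \<times> W"
    by (auto simp: wbg_def)
  have mu: "\<And>x. x \<in> V \<union> W \<Longrightarrow> 0 \<le> mu x"
    using wbg_mu_pos[OF assms(2)] by (simp add: less_imp_le)
  let ?E1 = "E - V \<times> S"
  have E1: "?E1 \<subseteq> V \<times> (W - S)" using E by auto
  have "is_subgraph V (W - S) ?E1 V W E"
    using E1 by (auto simp: is_subgraph_def)
  then have "mu_theta \<theta> mu V (W - S) ?E1 \<le> mu_theta \<theta> mu V W E"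
    using assms(3) by (simp add: theta_maximal_def)
  moreover have "mu_theta \<theta> mu V (W - S) ?E1
      = emeas mu ?E1 powr \<theta> * (wmeas mu V * wmeas mu (W - S)) powr (1 - \<theta>)"
    by (rule mu_theta_eq[OF E1]) (use mu in auto)
  ultimately have mass_le: "emeas mu ?E1 powr \<theta> * (wmeas mu V * wmeas mu (W - S)) powr (1 - \<theta>)
      \<le> emeas mu E powr \<theta> * (wmeas mu V * wmeas mu W) powr (1 - \<theta>)"
    using mu_theta_eq[OF E mu] by simp
  have "finite E" using E fin finite_subset by blast
  moreover have "?E1 = E - E \<inter> V \<times> S" by blast
  ultimately have e1: "emeas mu ?E1 = emeas mu E - emeas mu (E \<inter> V \<times> S)"
    by (simp add: emeas_diff)
  have b1: "wmeas mu (W - S) = wmeas mu W - wmeas mu S"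
    using fin(2) assms(4) by (rule wmeas_diff)
  have "(1 - 1/\<theta>) * emeas mu E * (wmeas mu W - wmeas mu (W - S))
      \<le> wmeas mu W * (emeas mu E - emeas mu ?E1)"
  proof (rule edge_loss_lower_bound[OF assms(1) _ _ _ _ _ mass_le])
    show "0 \<le> wmeas mu (W - S)" "0 \<le> emeas mu ?E1" "0 \<le> emeas mu E"
      using mu E1 E by (auto intro: wmeas_nonneg emeas_nonneg)
    show "wmeas mu (W - S) \<le> wmeas mu W"
      using fin mu by (intro wmeas_mono) auto
    show "emeas mu ?E1 \<le> wmeas mu V * wmeas mu (W - S)"
      using fin E1 mu by (intro emeas_le_wmeas_mult) auto
  qed
  then show ?thesis by (simp add: e1 b1)
qed

lemma theta_maximal_incident_edges_left:
  assumes "1 < \<theta>" "wbg mu V W E" "theta_maximal \<theta> mu V W E" "S \<subseteq> V"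
  shows "(1 - 1/\<theta>) * emeas mu E * wmeas mu S \<le> wmeas mu V * emeas mu (E \<inter> S \<times> W)"
proof -
  have "prod.swap ` E \<inter> W \<times> S = prod.swap ` (E \<inter> S \<times> W)" by auto
  then show ?thesis
    using theta_maximal_incident_edges_right[OF assms(1) wbg_swap[OF assms(2)]
        theta_maximal_swap[OF assms(3)] assms(4)]
    by (simp add: emeas_swap)
qed

lemma theta_maximal_degree_right:
  assumes "1 < \<theta>" "wbg mu V W E" "theta_maximal \<theta> mu V W E" "w \<in> W"
  shows "(1 - 1/\<theta>) * emeas mu E \<le> wmeas mu W * wmeas mu {v \<in> V. (v, w) \<in> E}"
proof -
  have "(1 - 1/\<theta>) * emeas mu E * mu w \<le> wmeas mu W * (mu w * wmeas mu {v \<in> V. (v, w) \<in> E})"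
    using theta_maximal_incident_edges_right[OF assms(1-3), of "{w}"] assms(4)
    by (simp add: emeas_edges_at wmeas_def)
  moreover have "0 < mu w" using wbg_mu_pos[OF assms(2)] assms(4) by simp
  ultimately show ?thesis by (simp add: mult_ac)
qed

lemma mu_theta_le_of_degree_bounds:
  assumes "2 \<le> \<theta>" "0 < p" "wbg mu V W E" "E \<noteq> {}" "is_subgraph V' W' E' V W E" "w \<in> W'"
    and deg: "p * emeas mu E \<le> wmeas mu W * wmeas mu V'"
    and dens: "p * emeas mu E * wmeas mu V' \<le> wmeas mu V * emeas mu E'"
  shows "mu_theta \<theta> mu V W E \<le> p powr (- \<theta>) * mu_theta (\<theta> - 1) mu V' W' E'"
proof -
  from assms(3) have fin: "finite V" "finite W" and E: "E \<subseteq> V \<times> W"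
    by (auto simp: wbg_def)
  have mu: "\<And>x. x \<in> V \<union> W \<Longrightarrow> 0 < mu x" using wbg_mu_pos[OF assms(3)] .
  then have mu_nonneg: "\<And>x. x \<in> V \<union> W \<Longrightarrow> 0 \<le> mu x" by (simp add: less_imp_le)
  have sub: "V' \<subseteq> V" "W' \<subseteq> W" "E' \<subseteq> V' \<times> W'"
    using assms(5) by (auto simp: is_subgraph_def)
  obtain v w where "(v, w) \<in> E" using assms(4) by auto
  have "emeas mu E powr \<theta> * (wmeas mu V * wmeas mu W) powr (1 - \<theta>)
      \<le> p powr (- \<theta>) * (emeas mu E' powr (\<theta> - 1) * (wmeas mu V' * wmeas mu W') powr (2 - \<theta>))"
  proof (rule theta_mass_le_of_degree_bounds[OF assms(1,2) _ _ _ _ _ deg dens])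
    show "0 < emeas mu E" using assms(3,4) by (rule wbg_emeas_pos)
    show "0 < wmeas mu V"
      using \<open>(v, w) \<in> E\<close> E fin mu by (intro wmeas_pos) auto
    show "0 < wmeas mu W'"
      using assms(6) sub fin mu by (intro wmeas_pos) (auto intro: finite_subset)
    show "wmeas mu W' \<le> wmeas mu W"
      using sub fin mu_nonneg by (intro wmeas_mono) auto
    show "0 \<le> wmeas mu V'"
      using sub mu_nonneg by (intro wmeas_nonneg) auto
  qed
  then show ?thesis
    using sub E by (subst (1 2) mu_theta_eq) (auto intro: mu_nonneg)
qed

theorem lemma5p10:
  fixes \<theta> :: real and mu :: "real \<Rightarrow> real" and V W :: "real set"
    and E :: "(real \<times> real) set" and w0 :: real
  assumes "\<theta> > 2"
    and "wbg mu V W E"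
    and "E \<noteq> {}"
    and "theta_maximal \<theta> mu V W E"
    and "w0 \<in> W"
  shows "\<exists>V' W' E'. is_subgraph V' W' E' V W E
           \<and> (\<forall>v\<in>V'. (v, w0) \<in> E')
           \<and> (\<forall>w\<in>W'. \<exists>v\<in>V'. (v, w) \<in> E')
           \<and> mu_theta \<theta> mu V W E \<le> (1 - 1/\<theta>) powr (-\<theta>) * mu_theta (\<theta> - 1) mu V' W' E'"
proof -
  define p where "p = 1 - 1/\<theta>"
  define V' where "V' = {v \<in> V. (v, w0) \<in> E}"
  define W' where "W' = E `` V'"
  define E' where "E' = E \<inter> V' \<times> W'"
  have \<theta>: "1 < \<theta>" and "0 < p" using assms(1) by (auto simp: p_def)
  have E: "E \<subseteq> V \<times> W" using assms(2) by (simp add: wbg_def)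
  have sub: "is_subgraph V' W' E' V W E"
    using E by (auto simp: is_subgraph_def V'_def W'_def E'_def)
  have deg: "p * emeas mu E \<le> wmeas mu W * wmeas mu V'"
    using theta_maximal_degree_right[OF \<theta> assms(2,4,5)] by (simp add: p_def V'_def)
  have "E \<inter> V' \<times> W = E'" using E by (auto simp: E'_def W'_def)
  then have dens: "p * emeas mu E * wmeas mu V' \<le> wmeas mu V * emeas mu E'"
    using theta_maximal_incident_edges_left[OF \<theta> assms(2,4), of V'] by (simp add: p_def V'_def)
  have "0 < emeas mu E" using assms(2,3) by (rule wbg_emeas_pos)
  then have "V' \<noteq> {}"
    using deg mult_pos_pos[OF \<open>0 < p\<close> \<open>0 < emeas mu E\<close>] by (auto simp: wmeas_def)
  then have "w0 \<in> W'" by (auto simp: V'_def W'_def)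
  have "mu_theta \<theta> mu V W E \<le> p powr (- \<theta>) * mu_theta (\<theta> - 1) mu V' W' E'"
    using assms(1-3) \<open>0 < p\<close> sub \<open>w0 \<in> W'\<close> deg dens by (intro mu_theta_le_of_degree_bounds) auto
  moreover have "\<forall>v\<in>V'. (v, w0) \<in> E'"
    using \<open>w0 \<in> W'\<close> by (auto simp: V'_def E'_def)
  moreover have "\<forall>w\<in>W'. \<exists>v\<in>V'. (v, w) \<in> E'"
    by (auto simp: W'_def E'_def)
  ultimately show ?thesis
    using sub unfolding p_def by blast
qed

end
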